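(* Let $1\le p<\infty$ and $g\in H(\mathbb{D})$. Then the Volterra type operator $T_g: S_2^p\to S_2^p$, $T_gf(z)=\int_0^z f(w)g'(w)\,dw$, is bounded if and only if $g\in S_2^p$.
   Context: $\mathbb{D}$ is the open unit disc, $H(\mathbb{D})$ the space of analytic functions on $\mathbb{D}$. For $1\le p<\infty$, $H^p$ is the Hardy space of $f\in H(\mathbb{D})$ with $\|f\|_{H^p}^p=\sup_{0<r<1}\frac{1}{2\pi}\int_0^{2\pi}|f(re^{i\theta})|^p\,d\theta<\infty$. $S_2^p=\{f\in H(\mathbb{D}): f''\in H^p\}$ with norm $\|f\|_{S_2^p}=|f(0)|+|f'(0)|+\|f''\|_{H^p}$. *)

theory Defs
  imports "HOL-Complex_Analysis.Complex_Analysis"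
begin

definition hardy_mean :: "real \<Rightarrow> (complex \<Rightarrow> complex) \<Rightarrow> real \<Rightarrow> real" where
  "hardy_mean p f r = (1 / (2 * pi)) * integral {0..2*pi} (\<lambda>t. norm (f (of_real r * cis t)) powr p)"

definition in_Hardy :: "real \<Rightarrow> (complex \<Rightarrow> complex) \<Rightarrow> bool" where
  "in_Hardy p f \<longleftrightarrow> f holomorphic_on ball 0 1 \<and> bdd_above (hardy_mean p f ` {0<..<1})"

definition Hardy_norm :: "real \<Rightarrow> (complex \<Rightarrow> complex) \<Rightarrow> real" where
  "Hardy_norm p f = (SUP r\<in>{0<..<1}. hardy_mean p f r) powr (1 / p)"

definition in_S2 :: "real \<Rightarrow> (complex \<Rightarrow> complex) \<Rightarrow> bool" where
  "in_S2 p f \<longleftrightarrow> f holomorphic_on ball 0 1 \<and> in_Hardy p (deriv (deriv f))"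

definition S2_norm :: "real \<Rightarrow> (complex \<Rightarrow> complex) \<Rightarrow> real" where
  "S2_norm p f = norm (f 0) + norm (deriv f 0) + Hardy_norm p (deriv (deriv f))"

definition volterra :: "(complex \<Rightarrow> complex) \<Rightarrow> (complex \<Rightarrow> complex) \<Rightarrow> complex \<Rightarrow> complex" where
  "volterra g f z = contour_integral (linepath 0 z) (\<lambda>w. f w * deriv g w)"

end

theory Submission
  imports Defs
begin

text \<open>
  Necessity: \<open>T\<^sub>g 1 = g - g(0)\<close>, so \<open>(T\<^sub>g 1)'' = g''\<close>.

  Sufficiency: \<open>(T\<^sub>g f)'' = f' g' + f g''\<close>. Cauchy's formula shows that an \<open>H\<^sup>p\<close>
  function grows at most like \<open>1/(1 - |z|)\<close>, so for \<open>f \<in> S\<^sub>2\<^sup>p\<close> radial integration gives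
  \<open>|f'(z)| \<lesssim> \<omega>(|z|)\<close> with the weight \<open>\<omega>(s) = 1 - log (1 - s)\<close>, which is integrable
  on \<open>[0,1)\<close>, and hence \<open>f\<close> is bounded. The term \<open>f g''\<close> is then controlled by
  \<open>\<parallel>g''\<parallel>\<^sub>p\<close>. For \<open>P = f' g'\<close> one integrates \<open>P' = f'' g' + f' g''\<close> along the radius:
  \<open>|P(re\<^sup>i\<^sup>t)| \<lesssim> 1 + \<integral>\<^sub>0\<^sup>r (|f''| + |g''|)(se\<^sup>i\<^sup>t) \<omega>(s) ds\<close>. Jensen's inequality for the finite
  measure \<open>\<omega>(s) ds\<close> bounds the \<open>p\<close>-th power of the radial integrals by
  \<open>\<integral>\<^sub>0\<^sup>r |f''(se\<^sup>i\<^sup>t)|\<^sup>p \<omega>(s) ds\<close>, and integrating in \<open>t\<close> (Fubini) turns these into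
  \<open>\<integral>\<^sub>0\<^sup>r M\<^sub>p(s,f'')\<^sup>p \<omega>(s) ds \<le> 2 \<parallel>f''\<parallel>\<^sub>p\<^sup>p\<close>.
\<close>

lemma le_add_powr_scaled:
  fixes x l p :: real
  assumes "0 \<le> x" "0 < l" "1 \<le> p"
  shows "x \<le> l + l powr (1 - p) * x powr p"
proof (cases "x \<le> l")
  case True
  then show ?thesis by (smt (verit) powr_ge_zero mult_nonneg_nonneg)
next
  case False
  then have "1 \<le> (x / l) powr (p - 1)"
    using assms by (simp add: ge_one_powr_ge_zero)
  then have "x \<le> x * (x / l) powr (p - 1)"
    using assms False by (simp add: mult_le_cancel_left1)
  also have "\<dots> = l powr (1 - p) * x powr p"
    using assms False by (simp add: powr_divide powr_diff powr_minus divide_simps)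
  finally show ?thesis
    using assms by (smt (verit) powr_ge_zero)
qed

lemma integral_mult_le_scaled_powr:
  fixes u w :: "'a::euclidean_space \<Rightarrow> real"
  assumes p: "1 \<le> p" and l: "0 < l"
    and u: "\<And>x. x \<in> S \<Longrightarrow> 0 \<le> u x" and w: "\<And>x. x \<in> S \<Longrightarrow> 0 \<le> w x"
    and int_uw: "(\<lambda>x. u x * w x) integrable_on S" and int_w: "w integrable_on S"
    and int_upw: "(\<lambda>x. u x powr p * w x) integrable_on S"
  shows "integral S (\<lambda>x. u x * w x) \<le> l * integral S w + l powr (1 - p) * integral S (\<lambda>x. u x powr p * w x)"
proof -
  have "integral S (\<lambda>x. u x * w x) \<le> integral S (\<lambda>x. l * w x + l powr (1 - p) * (u x powr p * w x))"
  proof (rule integral_le[OF int_uw])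
    show "(\<lambda>x. l * w x + l powr (1 - p) * (u x powr p * w x)) integrable_on S"
      by (intro integrable_add integrable_on_mult_right int_w int_upw)
    fix x assume x: "x \<in> S"
    have "u x * w x \<le> (l + l powr (1 - p) * u x powr p) * w x"
      using le_add_powr_scaled[OF u[OF x] l p] w[OF x] by (rule mult_right_mono)
    then show "u x * w x \<le> l * w x + l powr (1 - p) * (u x powr p * w x)"
      by (simp add: algebra_simps)
  qed
  also have "\<dots> = l * integral S w + l powr (1 - p) * integral S (\<lambda>x. u x powr p * w x)"
    by (simp add: integral_add int_w int_upw integrable_on_mult_right)
  finally show ?thesis .
qed

lemma integral_weighted_le_powr:
  fixes u w :: "'a::euclidean_space \<Rightarrow> real"
  assumes p: "1 \<le> p" and K: "0 \<le> K"
    and u: "\<And>x. x \<in> S \<Longrightarrow> 0 \<le> u x" and w: "\<And>x. x \<in> S \<Longrightarrow> 0 \<le> w x"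
    and int_uw: "(\<lambda>x. u x * w x) integrable_on S" and int_w: "w integrable_on S"
    and int_upw: "(\<lambda>x. u x powr p * w x) integrable_on S"
    and w_le: "integral S w \<le> M" and upw_le: "integral S (\<lambda>x. u x powr p * w x) \<le> M * K powr p"
  shows "integral S (\<lambda>x. u x * w x) \<le> 2 * M * K"
proof -
  have M: "0 \<le> M"
    using integral_nonneg[OF int_w w] w_le by linarith
  have Young: "integral S (\<lambda>x. u x * w x) \<le> l * M + l powr (1 - p) * (M * K powr p)"
    if l: "0 < l" for l
  proof -
    have "l * integral S w + l powr (1 - p) * integral S (\<lambda>x. u x powr p * w x)
        \<le> l * M + l powr (1 - p) * (M * K powr p)"
      using l w_le upw_le by (intro add_mono mult_left_mono) auto
    then show ?thesis
      using integral_mult_le_scaled_powr[OF p l u w int_uw int_w int_upw] by linarith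
  qed
  show ?thesis
  proof (cases "K = 0")
    case True
    have "integral S (\<lambda>x. u x * w x) \<le> 0 + e" if e: "0 < e" for e
    proof -
      have "integral S (\<lambda>x. u x * w x) \<le> e / (M + 1) * M"
        using Young[of "e / (M + 1)"] e M True p by simp
      also have "\<dots> \<le> e"
        using e M by (simp add: field_simps)
      finally show ?thesis by simp
    qed
    then have "integral S (\<lambda>x. u x * w x) \<le> 0"
      by (rule field_le_epsilon)
    then show ?thesis
      using True by simp
  next
    case False
    then have K: "0 < K"
      using K by simp
    then have "K powr (1 - p) * (M * K powr p) = M * K"
      by (simp add: powr_add[symmetric] mult.left_commute)
    then show ?thesis
      using Young[OF K] by argo
  qed
qed

lemma powr_add4_le:
  fixes a b c d p :: real
  assumes "0 \<le> a" "0 \<le> b" "0 \<le> c" "0 \<le> d" "0 < p"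
  shows "(a + b + c + d) powr p \<le> 4 powr p * (a powr p + b powr p + c powr p + d powr p)"
proof -
  define m where "m = max (max a b) (max c d)"
  have "(a + b + c + d) powr p \<le> (4 * m) powr p"
    using assms by (intro powr_mono2) (auto simp: m_def)
  also have "\<dots> = 4 powr p * m powr p"
    using assms by (simp add: powr_mult m_def le_max_iff_disj)
  also have "m powr p \<le> a powr p + b powr p + c powr p + d powr p"
    by (auto simp: m_def max_def)
  finally show ?thesis
    by simp
qed

section \<open>Integral means over circles\<close>

lemma continuous_on_polar:
  fixes a b :: "'a::topological_space \<Rightarrow> real"
  assumes h: "continuous_on (ball 0 1) h" and a: "continuous_on S a" and b: "continuous_on S b"
    and a_lt: "\<And>x. x \<in> S \<Longrightarrow> \<bar>a x\<bar> < 1"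
  shows "continuous_on S (\<lambda>x. h (of_real (a x) * cis (b x)))"
proof -
  have "continuous_on S (\<lambda>x. of_real (a x) * cis (b x))"
    by (intro continuous_intros a b)
  moreover have "(\<lambda>x. of_real (a x) * cis (b x)) ` S \<subseteq> ball 0 1"
    using a_lt by (auto simp: norm_mult)
  ultimately show ?thesis
    using continuous_on_compose2[OF h] by blast
qed

lemma continuous_on_circle:
  assumes "continuous_on (ball 0 1) h" "\<bar>r\<bar> < 1"
  shows "continuous_on S (\<lambda>t. h (of_real r * cis t))"
  using continuous_on_polar[OF assms(1) continuous_on_const continuous_on_id] assms(2) by simp

lemma continuous_on_radius:
  assumes "continuous_on (ball 0 1) h" "r < 1"
  shows "continuous_on {0..r} (\<lambda>s. h (of_real s * cis t))"
  by (rule continuous_on_polar[OF assms(1) continuous_on_id continuous_on_const]) (use assms in auto)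

lemma norm_powr_circle_has_integral:
  assumes "continuous_on (ball 0 1) h" "0 \<le> r" "r < 1" "0 < p"
  shows "((\<lambda>t. norm (h (of_real r * cis t)) powr p) has_integral (2 * pi * hardy_mean p h r)) {0..2*pi}"
proof -
  have "(\<lambda>t. norm (h (of_real r * cis t)) powr p) integrable_on {0..2*pi}"
    using assms by (intro integrable_continuous_interval continuous_on_powr' continuous_intros
        continuous_on_circle) auto
  then show ?thesis
    by (simp add: hardy_mean_def has_integral_iff)
qed

lemma hardy_mean_nonneg:
  assumes "continuous_on (ball 0 1) h" "0 \<le> r" "r < 1" "0 < p"
  shows "0 \<le> hardy_mean p h r"
  using has_integral_nonneg[OF norm_powr_circle_has_integral[OF assms]] pi_gt_zero
  by (simp add: zero_le_mult_iff)

lemma hardy_mean_cong: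
  assumes "\<And>z. norm z < 1 \<Longrightarrow> f z = g z" "0 \<le> r" "r < 1"
  shows "hardy_mean p f r = hardy_mean p g r"
  using assms by (simp add: hardy_mean_def norm_mult)

lemma Hardy_norm_nonneg: "0 \<le> Hardy_norm p h"
  by (simp add: Hardy_norm_def)

lemma hardy_mean_le_Hardy_norm:
  assumes H: "in_Hardy p h" and p: "0 < p" and r: "r \<in> {0<..<1}"
  shows "hardy_mean p h r \<le> Hardy_norm p h powr p"
proof -
  have bdd: "bdd_above (hardy_mean p h ` {0<..<1})"
    using H by (simp add: in_Hardy_def)
  have "0 \<le> hardy_mean p h (1/2)"
    using H p by (intro hardy_mean_nonneg holomorphic_on_imp_continuous_on) (auto simp: in_Hardy_def)
  also have "\<dots> \<le> (SUP s\<in>{0<..<1}. hardy_mean p h s)"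
    by (rule cSUP_upper[OF _ bdd]) simp
  finally have "Hardy_norm p h powr p = (SUP s\<in>{0<..<1}. hardy_mean p h s)"
    using p by (simp add: Hardy_norm_def powr_powr)
  then show ?thesis
    using cSUP_upper[OF r bdd] by simp
qed

lemma Hardy_norm_le:
  assumes h: "continuous_on (ball 0 1) h" and p: "0 < p"
    and le: "\<And>r. r \<in> {0<..<1} \<Longrightarrow> hardy_mean p h r \<le> M"
  shows "Hardy_norm p h \<le> M powr (1 / p)"
proof -
  have "0 \<le> hardy_mean p h (1/2)"
    using h p by (intro hardy_mean_nonneg) auto
  also have "\<dots> \<le> (SUP r\<in>{0<..<1}. hardy_mean p h r)"
    using le by (intro cSUP_upper bdd_aboveI2[where M = M]) auto
  finally show ?thesis
    unfolding Hardy_norm_def using le p by (intro powr_mono2 cSUP_least) auto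
qed

lemma integral_norm_circle_le_Hardy_norm:
  assumes H: "in_Hardy p h" and p: "1 \<le> p" and r: "r \<in> {0<..<1}"
  shows "integral {0..2*pi} (\<lambda>t. norm (h (of_real r * cis t))) \<le> 4 * pi * Hardy_norm p h"
proof -
  have hc: "continuous_on (ball 0 1) h"
    using H by (simp add: in_Hardy_def holomorphic_on_imp_continuous_on)
  have mean: "((\<lambda>t. norm (h (of_real r * cis t)) powr p) has_integral (2 * pi * hardy_mean p h r)) {0..2*pi}"
    using r p by (intro norm_powr_circle_has_integral hc) auto
  have "integral {0..2*pi} (\<lambda>t. norm (h (of_real r * cis t)) * 1) \<le> 2 * (2 * pi) * Hardy_norm p h"
  proof (rule integral_weighted_le_powr[OF p])
    show "(\<lambda>t. norm (h (of_real r * cis t)) * 1) integrable_on {0..2*pi}"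
      using r by (auto intro!: integrable_continuous_interval continuous_intros continuous_on_circle hc)
    show "(\<lambda>t. norm (h (of_real r * cis t)) powr p * 1) integrable_on {0..2*pi}"
      using mean by auto
    show "integral {0..2*pi} (\<lambda>t. norm (h (of_real r * cis t)) powr p * 1) \<le> 2 * pi * Hardy_norm p h powr p"
      using hardy_mean_le_Hardy_norm[OF H _ r] p by (simp add: integral_unique[OF mean])
  qed (auto simp: Hardy_norm_nonneg)
  then show ?thesis
    by simp
qed

lemma norm_le_circle_integral:
  fixes h :: "complex \<Rightarrow> complex"
  assumes h: "h holomorphic_on cball 0 R" and w: "norm w < R"
  shows "2 * pi * norm (h w) \<le> R / (R - norm w) * integral {0..2*pi} (\<lambda>t. norm (h (of_real R * cis t)))"
proof -
  have R: "0 < R" "0 < R - norm w"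
    using w norm_ge_zero[of w] by linarith+
  have "((\<lambda>u. h u / (u - w)) has_contour_integral (2 * of_real pi * \<i> * h w)) (circlepath 0 R)"
    using w by (intro Cauchy_integral_circlepath_simple h) simp
  then have Cauchy: "((\<lambda>t. h (of_real R * cis t) / (of_real R * cis t - w) * of_real R * \<i> * cis t)
      has_integral (2 * of_real pi * \<i> * h w)) {0..2*pi}"
    unfolding circlepath_def by (subst (asm) has_contour_integral_part_circlepath_iff) auto
  have "continuous_on {0..2*pi} (\<lambda>t. h (of_real R * cis t))"
    using R by (intro continuous_on_compose2[OF holomorphic_on_imp_continuous_on[OF h]] continuous_intros)
      (auto simp: norm_mult)
  then have int_norm: "(\<lambda>t. norm (h (of_real R * cis t)) * (R / (R - norm w))) integrable_on {0..2*pi}"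
    by (intro integrable_continuous_interval continuous_intros)
  have kernel: "norm (h (of_real R * cis t) / (of_real R * cis t - w) * of_real R * \<i> * cis t)
      \<le> norm (h (of_real R * cis t)) * (R / (R - norm w))" for t
  proof -
    have "R - norm w \<le> norm (of_real R * cis t - w)"
      using norm_triangle_ineq2[of "of_real R * cis t" w] R by (simp add: norm_mult)
    then have "norm (h (of_real R * cis t)) / norm (of_real R * cis t - w) * R
        \<le> norm (h (of_real R * cis t)) / (R - norm w) * R"
      using R by (intro mult_right_mono divide_left_mono mult_pos_pos) auto
    then show ?thesis
      using R by (simp add: norm_mult norm_divide)
  qed
  have "norm (2 * of_real pi * \<i> * h w) \<le> integral {0..2*pi} (\<lambda>t. norm (h (of_real R * cis t)) * (R / (R - norm w)))"
    using integral_norm_bound_integral[OF has_integral_integrable[OF Cauchy] int_norm kernel]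
    by (simp only: integral_unique[OF Cauchy])
  then show ?thesis
    by (simp add: norm_mult mult.commute)
qed

lemma norm_le_Hardy_norm_div:
  assumes H: "in_Hardy p h" and p: "1 \<le> p" and w: "norm w < 1"
  shows "norm (h w) \<le> 4 * Hardy_norm p h / (1 - norm w)"
proof -
  define R where "R = (1 + norm w) / 2"
  have R: "0 < R" "R < 1" "norm w < R"
    using w by (auto simp: R_def add_pos_nonneg)
  have "h holomorphic_on cball 0 R"
    using H R by (auto simp: in_Hardy_def intro: holomorphic_on_subset)
  then have "2 * pi * norm (h w) \<le> R / (R - norm w) * integral {0..2*pi} (\<lambda>t. norm (h (of_real R * cis t)))"
    using R by (intro norm_le_circle_integral)
  also have "\<dots> \<le> R / (R - norm w) * (4 * pi * Hardy_norm p h)"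
    using R by (intro mult_left_mono integral_norm_circle_le_Hardy_norm[OF H p]) auto
  also have "R / (R - norm w) = (1 + norm w) / (1 - norm w)"
    using R by (simp add: R_def field_simps)
  finally have "2 * pi * norm (h w) \<le> 2 * pi * ((1 + norm w) / (1 - norm w) * (2 * Hardy_norm p h))"
    by (simp add: algebra_simps)
  then have "norm (h w) \<le> (1 + norm w) / (1 - norm w) * (2 * Hardy_norm p h)"
    by (rule mult_left_le_imp_le) simp
  also have "\<dots> \<le> 2 / (1 - norm w) * (2 * Hardy_norm p h)"
    using w Hardy_norm_nonneg by (intro mult_right_mono divide_right_mono) auto
  finally show ?thesis
    by simp
qed

lemma hardy_mean_le_4_Hardy_norm:
  assumes H: "in_Hardy p h" and p: "1 \<le> p" and r: "0 \<le> r" "r < 1"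
  shows "hardy_mean p h r \<le> (4 * Hardy_norm p h) powr p"
proof (cases "r = 0")
  case True
  \<comment> \<open>\<open>in_Hardy\<close> only controls the means for \<open>0 < r\<close>; at \<open>r = 0\<close> use the growth bound.\<close>
  then have "hardy_mean p h r = norm (h 0) powr p"
    by (simp add: hardy_mean_def)
  also have "\<dots> \<le> (4 * Hardy_norm p h) powr p"
    using norm_le_Hardy_norm_div[OF H p, of 0] p by (intro powr_mono2) auto
  finally show ?thesis .
next
  case False
  then have "hardy_mean p h r \<le> Hardy_norm p h powr p"
    using hardy_mean_le_Hardy_norm[OF H] p r by simp
  also have "\<dots> \<le> (4 * Hardy_norm p h) powr p"
    using p Hardy_norm_nonneg by (intro powr_mono2) auto
  finally show ?thesis .
qed

section \<open>Radial integration and growth of \<open>S\<^sub>2\<^sup>p\<close> functions\<close>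

lemma norm_le_radial_integral:
  assumes h: "h holomorphic_on ball 0 1" and r: "0 \<le> r" "r < 1"
  shows "norm (h (of_real r * cis t)) \<le> norm (h 0) + integral {0..r} (\<lambda>s. norm (deriv h (of_real s * cis t)))"
proof -
  have D: "((\<lambda>s. h (of_real s * cis t)) has_vector_derivative deriv h (of_real s * cis t) * cis t)
      (at s within {0..r})" if s: "s \<in> {0..r}" for s
  proof -
    have "(h has_field_derivative deriv h (of_real s * cis t)) (at (of_real s * cis t))"
      using s r by (intro holomorphic_derivI[OF h]) (auto simp: norm_mult)
    then have "((h \<circ> (\<lambda>s. of_real s * cis t)) has_vector_derivative cis t * deriv h (of_real s * cis t)) (at s)"
      by (intro field_vector_diff_chain_at)
        (auto intro!: derivative_eq_intros simp: has_vector_derivative_def scaleR_conv_of_real)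
    then show ?thesis
      by (auto simp: o_def mult.commute intro: has_vector_derivative_at_within)
  qed
  have FTC: "((\<lambda>s. deriv h (of_real s * cis t) * cis t) has_integral (h (of_real r * cis t) - h 0)) {0..r}"
    using fundamental_theorem_of_calculus[OF r(1) D] by simp
  have "continuous_on {0..r} (\<lambda>s. deriv h (of_real s * cis t))"
    using r by (intro continuous_on_radius holomorphic_on_imp_continuous_on holomorphic_deriv h) auto
  then have "norm (integral {0..r} (\<lambda>s. deriv h (of_real s * cis t) * cis t))
      \<le> integral {0..r} (\<lambda>s. norm (deriv h (of_real s * cis t)))"
    by (intro integral_norm_bound_integral[OF has_integral_integrable[OF FTC]])
      (auto simp: norm_mult intro!: integrable_continuous_interval continuous_intros)
  then show ?thesis
    unfolding integral_unique[OF FTC]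
    using norm_triangle_ineq2[of "h (of_real r * cis t)" "h 0"] by linarith
qed

lemma norm_le_integral_of_deriv_bound:
  assumes h: "h holomorphic_on ball 0 1" and w: "norm w < 1"
    and deriv_le: "\<And>z. norm z < 1 \<Longrightarrow> norm (deriv h z) \<le> u (norm z)"
    and u: "u integrable_on {0..norm w}"
  shows "norm (h w) \<le> norm (h 0) + integral {0..norm w} u"
proof -
  have polar: "w = of_real (norm w) * cis (Arg w)"
    using rcis_cmod_Arg[of w] by (simp add: rcis_def)
  have "integral {0..norm w} (\<lambda>s. norm (deriv h (of_real s * cis (Arg w)))) \<le> integral {0..norm w} u"
  proof (rule integral_le[OF _ u])
    show "(\<lambda>s. norm (deriv h (of_real s * cis (Arg w)))) integrable_on {0..norm w}"
      using w by (intro integrable_continuous_interval continuous_intros continuous_on_radius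
          holomorphic_on_imp_continuous_on holomorphic_deriv h) auto
    show "norm (deriv h (of_real s * cis (Arg w))) \<le> u s" if "s \<in> {0..norm w}" for s
      using deriv_le[of "of_real s * cis (Arg w)"] that w by (simp add: norm_mult)
  qed
  then show ?thesis
    using norm_le_radial_integral[OF h norm_ge_zero w, of "Arg w"] polar by simp
qed

lemma inverse_one_minus_has_integral:
  fixes r :: real
  assumes "0 \<le> r" "r < 1"
  shows "((\<lambda>s. 1 / (1 - s)) has_integral - ln (1 - r)) {0..r}"
proof -
  have D: "((\<lambda>s. - ln (1 - s)) has_vector_derivative 1 / (1 - s)) (at s within {0..r})"
    if "s \<in> {0..r}" for s
    using that assms
    by (auto intro!: derivative_eq_intros simp: has_real_derivative_iff_has_vector_derivative[symmetric])
  show ?thesis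
    using fundamental_theorem_of_calculus[OF assms(1) D] by simp
qed

text \<open>The weight \<open>\<omega>\<close> of the proof idea; its integral over \<open>[0,1)\<close> is 2.\<close>

definition log_weight :: "real \<Rightarrow> real" where
  "log_weight s = 1 - ln (1 - s)"

lemma log_weight_nonneg:
  assumes "0 \<le> s" "s < 1"
  shows "0 \<le> log_weight s"
proof -
  have "ln (1 - s) \<le> 0"
    using assms by (simp add: ln_le_zero_iff)
  then show ?thesis
    by (simp add: log_weight_def)
qed

lemma continuous_on_log_weight: "r < 1 \<Longrightarrow> continuous_on {0..r} log_weight"
  unfolding log_weight_def by (intro continuous_intros) auto

lemma integral_log_weight_le:
  assumes r: "0 \<le> r" "r < 1"
  shows "integral {0..r} log_weight \<le> 2"
proof -
  have D: "((\<lambda>s. 2 * s + (1 - s) * ln (1 - s)) has_vector_derivative log_weight s) (at s within {0..r})"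
    if "s \<in> {0..r}" for s
    using that r
    by (auto intro!: derivative_eq_intros
        simp: has_real_derivative_iff_has_vector_derivative[symmetric] log_weight_def)
  have "(log_weight has_integral 2 * r + (1 - r) * ln (1 - r)) {0..r}"
    using fundamental_theorem_of_calculus[OF r(1) D] by simp
  moreover have "(1 - r) * ln (1 - r) \<le> 0"
    using r by (intro mult_nonneg_nonpos) auto
  ultimately show ?thesis
    using r by (simp add: integral_unique)
qed

lemma S2_norm_ge:
  shows "norm (f 0) \<le> S2_norm p f" and "norm (deriv f 0) \<le> S2_norm p f"
    and "Hardy_norm p (deriv (deriv f)) \<le> S2_norm p f" and "0 \<le> S2_norm p f"
  using Hardy_norm_nonneg[of p "deriv (deriv f)"] by (simp_all add: S2_norm_def)

lemma norm_deriv_le_S2_norm: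
  assumes f: "in_S2 p f" and p: "1 \<le> p" and w: "norm w < 1"
  shows "norm (deriv f w) \<le> 4 * S2_norm p f * log_weight (norm w)"
proof -
  define k where "k = Hardy_norm p (deriv (deriv f))"
  have f': "deriv f holomorphic_on ball 0 1"
    using f by (simp add: in_S2_def holomorphic_deriv)
  have int: "((\<lambda>s. 4 * k * (1 / (1 - s))) has_integral 4 * k * - ln (1 - norm w)) {0..norm w}"
    by (intro has_integral_mult_right inverse_one_minus_has_integral[OF norm_ge_zero w])
  moreover have "norm (deriv (deriv f) z) \<le> 4 * k * (1 / (1 - norm z))" if "norm z < 1" for z
    using norm_le_Hardy_norm_div[OF _ p that] f by (simp add: in_S2_def k_def)
  ultimately have "norm (deriv f w) \<le> norm (deriv f 0) + integral {0..norm w} (\<lambda>s. 4 * k * (1 / (1 - s)))"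
    by (intro norm_le_integral_of_deriv_bound[OF f' w] has_integral_integrable)
  also have "\<dots> = norm (deriv f 0) + 4 * k * - ln (1 - norm w)"
    by (simp only: integral_unique[OF int])
  also have "\<dots> \<le> 4 * S2_norm p f + 4 * S2_norm p f * - ln (1 - norm w)"
    using S2_norm_ge[where f = f and p = p] w by (intro add_mono mult_right_mono) (auto simp: k_def)
  finally show ?thesis
    by (simp add: log_weight_def algebra_simps)
qed

lemma norm_le_S2_norm:
  assumes f: "in_S2 p f" and p: "1 \<le> p" and w: "norm w < 1"
  shows "norm (f w) \<le> 9 * S2_norm p f"
proof -
  have hf: "f holomorphic_on ball 0 1"
    using f by (simp add: in_S2_def)
  have "(\<lambda>s. 4 * S2_norm p f * log_weight s) integrable_on {0..norm w}"
    using w by (intro integrable_continuous_interval continuous_intros continuous_on_log_weight)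
  then have "norm (f w) \<le> norm (f 0) + integral {0..norm w} (\<lambda>s. 4 * S2_norm p f * log_weight s)"
    by (intro norm_le_integral_of_deriv_bound[OF hf w] norm_deriv_le_S2_norm[OF f p])
  also have "\<dots> = norm (f 0) + 4 * S2_norm p f * integral {0..norm w} log_weight"
    by simp
  also have "\<dots> \<le> S2_norm p f + 4 * S2_norm p f * 2"
    using S2_norm_ge(4)[of p f]
    by (intro add_mono S2_norm_ge mult_left_mono integral_log_weight_le[OF norm_ge_zero w]) auto
  finally show ?thesis
    by simp
qed

section \<open>The Volterra operator\<close>

lemma volterra_has_field_derivative:
  assumes f: "f holomorphic_on ball 0 1" and g: "g holomorphic_on ball 0 1" and w: "w \<in> ball 0 1"
  shows "(volterra g f has_field_derivative f w * deriv g w) (at w)"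
proof -
  define h where "h = (\<lambda>w. f w * deriv g w)"
  have "h holomorphic_on ball 0 1"
    unfolding h_def by (intro holomorphic_intros f holomorphic_deriv g) auto
  then obtain \<Phi> where \<Phi>: "\<And>x. x \<in> ball 0 1 \<Longrightarrow> (\<Phi> has_field_derivative h x) (at x within ball 0 1)"
    using holomorphic_convex_primitive'[OF convex_ball open_ball] by metis
  have volterra_eq: "volterra g f z = \<Phi> z - \<Phi> 0" if z: "z \<in> ball 0 1" for z
  proof -
    have "path_image (linepath 0 z) \<subseteq> ball 0 1"
      using z by (simp add: closed_segment_subset)
    then have "(h has_contour_integral (\<Phi> z - \<Phi> 0)) (linepath 0 z)"
      using contour_integral_primitive[OF \<Phi> valid_path_linepath] by simp
    then show ?thesis
      unfolding volterra_def h_def by (simp add: contour_integral_unique)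
  qed
  have "((\<lambda>z. \<Phi> z - \<Phi> 0) has_field_derivative h w) (at w)"
    using \<Phi>[OF w] by (auto intro!: derivative_eq_intros simp: at_within_open[OF w])
  then show ?thesis
    unfolding h_def
    by (rule has_field_derivative_transform_within_open[OF _ open_ball w]) (simp add: volterra_eq)
qed

lemma holomorphic_on_volterra:
  assumes "f holomorphic_on ball 0 1" "g holomorphic_on ball 0 1"
  shows "volterra g f holomorphic_on ball 0 1"
  unfolding holomorphic_on_open[OF open_ball] using volterra_has_field_derivative[OF assms] by blast

lemma deriv_volterra:
  assumes "f holomorphic_on ball 0 1" "g holomorphic_on ball 0 1" "w \<in> ball 0 1"
  shows "deriv (volterra g f) w = f w * deriv g w"
  by (rule DERIV_imp_deriv[OF volterra_has_field_derivative[OF assms]])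

lemma deriv2_volterra:
  assumes f: "f holomorphic_on ball 0 1" and g: "g holomorphic_on ball 0 1" and w: "w \<in> ball 0 1"
  shows "deriv (deriv (volterra g f)) w = deriv f w * deriv g w + f w * deriv (deriv g) w"
proof -
  have g': "deriv g holomorphic_on ball 0 1"
    by (rule holomorphic_deriv[OF g open_ball])
  have "deriv (deriv (volterra g f)) w = deriv (\<lambda>z. f z * deriv g z) w"
    by (rule complex_derivative_transform_within_open[OF
          holomorphic_deriv[OF holomorphic_on_volterra[OF f g] open_ball] _ open_ball w])
      (auto intro!: holomorphic_intros f g' simp: deriv_volterra[OF f g])
  also have "\<dots> = f w * deriv (deriv g) w + deriv f w * deriv g w"
    by (rule deriv_mult[OF holomorphic_on_imp_differentiable_at[OF f open_ball w]
          holomorphic_on_imp_differentiable_at[OF g' open_ball w]])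
  finally show ?thesis
    by simp
qed

section \<open>Integral means of \<open>(T\<^sub>g f)''\<close>\<close>

definition radial_powr_integral :: "real \<Rightarrow> (complex \<Rightarrow> complex) \<Rightarrow> real \<Rightarrow> real \<Rightarrow> real" where
  "radial_powr_integral p h r t = integral {0..r} (\<lambda>s. norm (h (of_real s * cis t)) powr p * log_weight s)"

lemma continuous_on_radial_integrand:
  fixes a b :: "'a::topological_space \<Rightarrow> real"
  assumes h: "continuous_on (ball 0 1) h" and p: "0 < p" and r: "r < 1"
    and a: "continuous_on S a" and b: "continuous_on S b" and a_in: "\<And>x. x \<in> S \<Longrightarrow> a x \<in> {0..r}"
  shows "continuous_on S (\<lambda>x. norm (h (of_real (a x) * cis (b x))) powr p * log_weight (a x))"
proof -
  have "continuous_on S (\<lambda>x. h (of_real (a x) * cis (b x)))"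
    using a_in r by (intro continuous_on_polar[OF h a b]) fastforce
  moreover have "continuous_on S (\<lambda>x. log_weight (a x))"
    using a_in by (intro continuous_on_compose2[OF continuous_on_log_weight[OF r] a]) auto
  ultimately show ?thesis
    using p by (intro continuous_on_mult continuous_on_powr' continuous_on_norm continuous_on_const) auto
qed

lemma radial_powr_integral_nonneg:
  assumes h: "continuous_on (ball 0 1) h" and p: "0 < p" and r: "0 \<le> r" "r < 1"
  shows "0 \<le> radial_powr_integral p h r t"
  unfolding radial_powr_integral_def
  using r by (intro integral_nonneg integrable_continuous_interval mult_nonneg_nonneg log_weight_nonneg
      continuous_on_radial_integrand[OF h p r(2) continuous_on_id continuous_on_const]) auto

lemma continuous_on_radial_powr_integral:
  assumes "continuous_on (ball 0 1) h" "0 < p" "r < 1"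
  shows "continuous_on {0..2*pi} (radial_powr_integral p h r)"
proof -
  have "continuous_on ({0..2*pi} \<times> cbox 0 r)
      (\<lambda>(t, s). norm (h (of_real s * cis t)) powr p * log_weight s)"
    using continuous_on_radial_integrand[OF assms continuous_on_snd[OF continuous_on_id]
        continuous_on_fst[OF continuous_on_id], where S = "{0..2*pi} \<times> {0..r}"]
    by (auto simp: case_prod_beta')
  then show ?thesis
    unfolding radial_powr_integral_def using integral_continuous_on_param by fastforce
qed

lemma integral_radial_powr_integral_le:
  assumes h: "continuous_on (ball 0 1) h" and p: "0 < p" and r: "0 \<le> r" "r < 1"
    and mean_le: "\<And>s. s \<in> {0..r} \<Longrightarrow> hardy_mean p h s \<le> B"
  shows "integral {0..2*pi} (radial_powr_integral p h r) \<le> 4 * pi * B"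
proof -
  define F where "F = (\<lambda>s t. norm (h (of_real s * cis t)) powr p * log_weight s)"
  have B: "0 \<le> B"
    using hardy_mean_nonneg[OF h order_refl _ p] mean_le[of 0] r by fastforce
  have cont: "continuous_on ({0..r} \<times> {0..2*pi}) (\<lambda>(s, t). F s t)"
    using continuous_on_radial_integrand[OF h p r(2) continuous_on_fst[OF continuous_on_id]
        continuous_on_snd[OF continuous_on_id], where S = "{0..r} \<times> {0..2*pi}"]
    by (auto simp: F_def case_prod_beta')
  from cont have "continuous_on (cbox (0, 0) (r, 2*pi)) (\<lambda>(s, t). F s t)"
    by (simp add: cbox_Pair_eq)
  have "integral {0..2*pi} (radial_powr_integral p h r) = integral {0..2*pi} (\<lambda>t. integral {0..r} (\<lambda>s. F s t))"
    unfolding radial_powr_integral_def[abs_def] F_def ..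
  also have "\<dots> = integral {0..r} (\<lambda>s. integral {0..2*pi} (F s))"
    using integral_swap_continuous[OF \<open>continuous_on (cbox (0, 0) (r, 2*pi)) _\<close>]
    by (simp add: cbox_interval)
  also have "\<dots> \<le> integral {0..r} (\<lambda>s. 2 * pi * B * log_weight s)"
  proof (rule integral_le)
    have "continuous_on {0..r} (\<lambda>s. integral (cbox 0 (2*pi)) (F s))"
      using cont by (intro integral_continuous_on_param) simp
    then show "(\<lambda>s. integral {0..2*pi} (F s)) integrable_on {0..r}"
      by (simp add: integrable_continuous_interval)
    show "(\<lambda>s. 2 * pi * B * log_weight s) integrable_on {0..r}"
      using r by (intro integrable_continuous_interval continuous_intros continuous_on_log_weight)
    fix s assume s: "s \<in> {0..r}"
    then have "integral {0..2*pi} (F s) = 2 * pi * hardy_mean p h s * log_weight s"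
      unfolding F_def using r p
      by (intro integral_unique has_integral_mult_left norm_powr_circle_has_integral h) auto
    also have "\<dots> \<le> 2 * pi * B * log_weight s"
      using mean_le[OF s] log_weight_nonneg[of s] s r by (intro mult_right_mono) auto
    finally show "integral {0..2*pi} (F s) \<le> 2 * pi * B * log_weight s" .
  qed
  also have "\<dots> \<le> 2 * pi * B * 2"
    using mult_left_mono[OF integral_log_weight_le[OF r], of "2 * pi * B"] B by simp
  finally show ?thesis
    by simp
qed

lemma integral_norm_radial_le:
  assumes h: "continuous_on (ball 0 1) h" and p: "1 \<le> p" and r: "0 \<le> r" "r < 1"
  shows "integral {0..r} (\<lambda>s. norm (h (of_real s * cis t)) * log_weight s)
    \<le> 4 * radial_powr_integral p h r t powr (1 / p)"
proof -
  define J where "J = radial_powr_integral p h r t"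
  have cont: "continuous_on {0..r} (\<lambda>s. h (of_real s * cis t))"
    by (rule continuous_on_radius[OF h r(2)])
  have int_powr: "(\<lambda>s. norm (h (of_real s * cis t)) powr p * log_weight s) integrable_on {0..r}"
    using p r by (intro integrable_continuous_interval continuous_on_mult continuous_on_powr'
        continuous_on_norm cont continuous_on_const continuous_on_log_weight) auto
  have J: "0 \<le> J"
    unfolding J_def using h p r by (intro radial_powr_integral_nonneg) auto
  have "integral {0..r} (\<lambda>s. norm (h (of_real s * cis t)) * log_weight s) \<le> 2 * 2 * (J / 2) powr (1 / p)"
  proof (rule integral_weighted_le_powr[OF p])
    show "(\<lambda>s. norm (h (of_real s * cis t)) * log_weight s) integrable_on {0..r}"
      using r by (intro integrable_continuous_interval continuous_intros cont continuous_on_log_weight)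
    show "log_weight integrable_on {0..r}"
      using r by (intro integrable_continuous_interval continuous_on_log_weight)
    show "integral {0..r} (\<lambda>s. norm (h (of_real s * cis t)) powr p * log_weight s) \<le> 2 * ((J / 2) powr (1 / p)) powr p"
      using J p by (simp add: J_def radial_powr_integral_def powr_powr)
  qed (use r int_powr integral_log_weight_le log_weight_nonneg in auto)
  also have "\<dots> \<le> 4 * J powr (1 / p)"
    using J p by (simp add: powr_mono2)
  finally show ?thesis
    by (simp add: J_def)
qed

lemma norm_deriv_deriv_mult_deriv_le:
  assumes f: "in_S2 p f" and g: "in_S2 p g" and p: "1 \<le> p" and w: "norm w < 1"
  shows "norm (deriv (\<lambda>z. deriv f z * deriv g z) w)
    \<le> 4 * S2_norm p g * (norm (deriv (deriv f) w) * log_weight (norm w))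
      + 4 * S2_norm p f * (norm (deriv (deriv g) w) * log_weight (norm w))"
proof -
  have f': "deriv f holomorphic_on ball 0 1" and g': "deriv g holomorphic_on ball 0 1"
    using f g by (auto simp: in_S2_def intro!: holomorphic_deriv)
  have w': "w \<in> ball 0 1"
    using w by simp
  have "norm (deriv (\<lambda>z. deriv f z * deriv g z) w)
      = norm (deriv f w * deriv (deriv g) w + deriv (deriv f) w * deriv g w)"
    by (simp add: deriv_mult[OF holomorphic_on_imp_differentiable_at[OF f' open_ball w']
          holomorphic_on_imp_differentiable_at[OF g' open_ball w']])
  also have "\<dots> \<le> norm (deriv f w) * norm (deriv (deriv g) w) + norm (deriv (deriv f) w) * norm (deriv g w)"
    using norm_triangle_ineq[of "deriv f w * deriv (deriv g) w" "deriv (deriv f) w * deriv g w"]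
    by (simp add: norm_mult)
  also have "\<dots> \<le> (4 * S2_norm p f * log_weight (norm w)) * norm (deriv (deriv g) w)
      + norm (deriv (deriv f) w) * (4 * S2_norm p g * log_weight (norm w))"
    using norm_deriv_le_S2_norm[OF f p w] norm_deriv_le_S2_norm[OF g p w]
    by (intro add_mono mult_left_mono mult_right_mono) auto
  finally show ?thesis
    by (simp add: algebra_simps)
qed

lemma norm_deriv_mult_deriv_le:
  assumes f: "in_S2 p f" and g: "in_S2 p g" and p: "1 \<le> p" and r: "0 \<le> r" "r < 1"
  shows "norm (deriv f (of_real r * cis t) * deriv g (of_real r * cis t))
    \<le> S2_norm p f * S2_norm p g
      + 16 * S2_norm p g * radial_powr_integral p (deriv (deriv f)) r t powr (1 / p)
      + 16 * S2_norm p f * radial_powr_integral p (deriv (deriv g)) r t powr (1 / p)"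
proof -
  define A B where "A = S2_norm p f" and "B = S2_norm p g"
  have f': "deriv f holomorphic_on ball 0 1" and f'': "deriv (deriv f) holomorphic_on ball 0 1"
    and g': "deriv g holomorphic_on ball 0 1" and g'': "deriv (deriv g) holomorphic_on ball 0 1"
    using f g by (auto simp: in_S2_def intro!: holomorphic_deriv)
  define P where "P = (\<lambda>w. deriv f w * deriv g w)"
  have P: "P holomorphic_on ball 0 1"
    unfolding P_def by (intro holomorphic_intros f' g')
  have bound: "norm (deriv P (of_real s * cis t))
      \<le> 4 * B * (norm (deriv (deriv f) (of_real s * cis t)) * log_weight s)
        + 4 * A * (norm (deriv (deriv g) (of_real s * cis t)) * log_weight s)"
    if "s \<in> {0..r}" for s
    using norm_deriv_deriv_mult_deriv_le[OF f g p, of "of_real s * cis t"] that r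
    by (simp add: P_def A_def B_def norm_mult)
  have int_radial: "(\<lambda>s. norm (h (of_real s * cis t)) * log_weight s) integrable_on {0..r}"
    if "h holomorphic_on ball 0 1" for h
    using r by (intro integrable_continuous_interval continuous_on_mult continuous_on_norm
        continuous_on_log_weight continuous_on_radius holomorphic_on_imp_continuous_on that)
  have int_P: "(\<lambda>s. norm (deriv P (of_real s * cis t))) integrable_on {0..r}"
    using r by (intro integrable_continuous_interval continuous_on_norm continuous_on_radius
        holomorphic_on_imp_continuous_on holomorphic_deriv P open_ball)
  have "integral {0..r} (\<lambda>s. norm (deriv P (of_real s * cis t)))
      \<le> integral {0..r} (\<lambda>s. 4 * B * (norm (deriv (deriv f) (of_real s * cis t)) * log_weight s)
        + 4 * A * (norm (deriv (deriv g) (of_real s * cis t)) * log_weight s))"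
    by (intro integral_le[OF int_P] integrable_add integrable_on_mult_right int_radial f'' g'' bound)
  also have "\<dots> = 4 * B * integral {0..r} (\<lambda>s. norm (deriv (deriv f) (of_real s * cis t)) * log_weight s)
      + 4 * A * integral {0..r} (\<lambda>s. norm (deriv (deriv g) (of_real s * cis t)) * log_weight s)"
    by (simp add: integral_add integrable_on_mult_right int_radial f'' g'')
  also have "\<dots> \<le> 4 * B * (4 * radial_powr_integral p (deriv (deriv f)) r t powr (1 / p))
      + 4 * A * (4 * radial_powr_integral p (deriv (deriv g)) r t powr (1 / p))"
    using S2_norm_ge(4)[of p f] S2_norm_ge(4)[of p g] r p
    by (intro add_mono mult_left_mono integral_norm_radial_le holomorphic_on_imp_continuous_on f'' g'')
      (auto simp: A_def B_def)
  finally have "norm (P (of_real r * cis t)) \<le> norm (P 0) + \<dots>"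
    using norm_le_radial_integral[OF P r, of t] by linarith
  moreover have "norm (P 0) \<le> A * B"
    unfolding P_def norm_mult using S2_norm_ge by (intro mult_mono) (auto simp: A_def B_def)
  ultimately show ?thesis
    by (simp add: P_def A_def B_def)
qed

lemma norm_powr_deriv2_volterra_le:
  fixes t :: real
  assumes f: "in_S2 p f" and g: "in_S2 p g" and p: "1 \<le> p" and r: "0 \<le> r" "r < 1"
  defines "z \<equiv> of_real r * cis t"
  shows "norm (deriv f z * deriv g z + f z * deriv (deriv g) z) powr p
    \<le> 4 powr p * ((S2_norm p f * S2_norm p g) powr p
      + (16 * S2_norm p g) powr p * radial_powr_integral p (deriv (deriv f)) r t
      + (16 * S2_norm p f) powr p * radial_powr_integral p (deriv (deriv g)) r t
      + (9 * S2_norm p f) powr p * norm (deriv (deriv g) z) powr p)"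
proof -
  define A B where "A = S2_norm p f" and "B = S2_norm p g"
  define JF JG where "JF = radial_powr_integral p (deriv (deriv f)) r t"
    and "JG = radial_powr_integral p (deriv (deriv g)) r t"
  have AB: "0 \<le> A" "0 \<le> B"
    using S2_norm_ge(4) by (auto simp: A_def B_def)
  have J: "0 \<le> JF" "0 \<le> JG"
    using f g p r unfolding JF_def JG_def in_S2_def
    by (auto intro!: radial_powr_integral_nonneg holomorphic_on_imp_continuous_on holomorphic_deriv)
  have z: "norm z < 1"
    using r by (simp add: z_def norm_mult)
  have "norm (deriv f z * deriv g z + f z * deriv (deriv g) z)
      \<le> norm (deriv f z * deriv g z) + norm (f z) * norm (deriv (deriv g) z)"
    using norm_triangle_ineq[of "deriv f z * deriv g z" "f z * deriv (deriv g) z"] by (simp add: norm_mult)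
  also have "\<dots> \<le> (A * B + 16 * B * JF powr (1 / p) + 16 * A * JG powr (1 / p)) + 9 * A * norm (deriv (deriv g) z)"
    using norm_deriv_mult_deriv_le[OF f g p r, of t] norm_le_S2_norm[OF f p z]
    by (intro add_mono mult_right_mono) (auto simp: A_def B_def JF_def JG_def z_def)
  finally have "norm (deriv f z * deriv g z + f z * deriv (deriv g) z) powr p
      \<le> (A * B + 16 * B * JF powr (1 / p) + 16 * A * JG powr (1 / p) + 9 * A * norm (deriv (deriv g) z)) powr p"
    using p by (intro powr_mono2) auto
  also have "\<dots> \<le> 4 powr p * ((A * B) powr p + (16 * B * JF powr (1 / p)) powr p
      + (16 * A * JG powr (1 / p)) powr p + (9 * A * norm (deriv (deriv g) z)) powr p)"
    using AB p by (intro powr_add4_le) auto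
  also have "(16 * B * JF powr (1 / p)) powr p = (16 * B) powr p * JF"
    using AB J p by (simp add: powr_mult powr_powr)
  also have "(16 * A * JG powr (1 / p)) powr p = (16 * A) powr p * JG"
    using AB J p by (simp add: powr_mult powr_powr)
  also have "(9 * A * norm (deriv (deriv g) z)) powr p = (9 * A) powr p * norm (deriv (deriv g) z) powr p"
    using AB by (simp add: powr_mult)
  finally show ?thesis
    by (simp add: A_def B_def JF_def JG_def)
qed

lemma hardy_mean_deriv2_le_S2_norm:
  assumes f: "in_S2 p f" and p: "0 < p" and r: "r \<in> {0<..<1}"
  shows "hardy_mean p (deriv (deriv f)) r \<le> S2_norm p f powr p"
proof -
  have "hardy_mean p (deriv (deriv f)) r \<le> Hardy_norm p (deriv (deriv f)) powr p"
    using f by (intro hardy_mean_le_Hardy_norm[OF _ p r]) (simp add: in_S2_def)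
  also have "\<dots> \<le> S2_norm p f powr p"
    using S2_norm_ge(3) p by (intro powr_mono2) (auto simp: Hardy_norm_nonneg)
  finally show ?thesis .
qed

lemma integral_radial_powr_integral_deriv2_le:
  assumes f: "in_S2 p f" and p: "1 \<le> p" and r: "0 \<le> r" "r < 1"
  shows "integral {0..2*pi} (radial_powr_integral p (deriv (deriv f)) r) \<le> 4 * pi * (4 * S2_norm p f) powr p"
proof -
  have "integral {0..2*pi} (radial_powr_integral p (deriv (deriv f)) r)
      \<le> 4 * pi * (4 * Hardy_norm p (deriv (deriv f))) powr p"
    using f p r
    by (intro integral_radial_powr_integral_le hardy_mean_le_4_Hardy_norm)
      (auto simp: in_S2_def in_Hardy_def holomorphic_on_imp_continuous_on)
  also have "\<dots> \<le> 4 * pi * (4 * S2_norm p f) powr p"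
    using S2_norm_ge(3) p by (auto simp: Hardy_norm_nonneg intro!: powr_mono2)
  finally show ?thesis .
qed

lemma collect_mean_bounds:
  fixes A B IF IG m p :: real
  assumes AB: "0 \<le> A" "0 \<le> B" and p: "1 \<le> p"
    and IF: "IF \<le> 4 * pi * (4 * A) powr p" and IG: "IG \<le> 4 * pi * (4 * B) powr p" and m: "m \<le> B powr p"
  shows "4 powr p * ((A * B) powr p * (2 * pi) + (16 * B) powr p * IF + (16 * A) powr p * IG
      + (9 * A) powr p * (2 * pi * m)) \<le> 2 * pi * (1536 * A * B) powr p"
proof -
  define Q where "Q = 64 * A * B"
  have "4 powr p * ((A * B) powr p * (2 * pi) + (16 * B) powr p * IF + (16 * A) powr p * IG
      + (9 * A) powr p * (2 * pi * m))
      \<le> 4 powr p * (2 * pi * Q powr p + 4 * pi * Q powr p + 4 * pi * Q powr p + 2 * pi * Q powr p)"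
  proof (intro mult_left_mono add_mono)
    show "(A * B) powr p * (2 * pi) \<le> 2 * pi * Q powr p"
      using AB p by (simp add: Q_def powr_mono2 mult_right_mono)
    have "(16 * B) powr p * IF \<le> (16 * B) powr p * (4 * pi * (4 * A) powr p)"
      by (intro mult_left_mono IF) simp
    also have "\<dots> = 4 * pi * Q powr p"
      using AB by (simp add: Q_def powr_mult[symmetric] mult_ac)
    finally show "(16 * B) powr p * IF \<le> 4 * pi * Q powr p" .
    have "(16 * A) powr p * IG \<le> (16 * A) powr p * (4 * pi * (4 * B) powr p)"
      by (intro mult_left_mono IG) simp
    also have "\<dots> = 4 * pi * Q powr p"
      using AB by (simp add: Q_def powr_mult[symmetric] mult_ac)
    finally show "(16 * A) powr p * IG \<le> 4 * pi * Q powr p" .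
    have "(9 * A) powr p * (2 * pi * m) \<le> (9 * A) powr p * (2 * pi * B powr p)"
      using m by (intro mult_left_mono) auto
    also have "\<dots> = 2 * pi * (9 * A * B) powr p"
      using AB by (simp add: powr_mult)
    also have "\<dots> \<le> 2 * pi * Q powr p"
      using AB p by (simp add: Q_def powr_mono2 mult_right_mono)
    finally show "(9 * A) powr p * (2 * pi * m) \<le> 2 * pi * Q powr p" .
  qed simp
  also have "\<dots> = 2 * pi * (6 * (4 * Q) powr p)"
    using AB powr_mult[of 4 Q p] by (simp add: Q_def algebra_simps)
  also have "\<dots> \<le> 2 * pi * (6 powr p * (4 * Q) powr p)"
    using powr_mono[OF p, of 6] by (intro mult_left_mono mult_right_mono) auto
  also have "\<dots> = 2 * pi * (1536 * A * B) powr p"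
    using AB by (simp add: Q_def powr_mult[symmetric] mult_ac)
  finally show ?thesis .
qed

lemma hardy_mean_deriv2_volterra_le:
  assumes f: "in_S2 p f" and g: "in_S2 p g" and p: "1 \<le> p" and r: "r \<in> {0<..<1}"
  shows "hardy_mean p (\<lambda>z. deriv f z * deriv g z + f z * deriv (deriv g) z) r
    \<le> (1536 * S2_norm p f * S2_norm p g) powr p"
proof -
  define A B where "A = S2_norm p f" and "B = S2_norm p g"
  define T where "T = (\<lambda>z. deriv f z * deriv g z + f z * deriv (deriv g) z)"
  define JF JG where "JF = radial_powr_integral p (deriv (deriv f)) r"
    and "JG = radial_powr_integral p (deriv (deriv g)) r"
  have r01: "0 \<le> r" "r < 1" and p0: "0 < p"
    using r p by auto
  have f'': "continuous_on (ball 0 1) (deriv (deriv f))" and g'': "continuous_on (ball 0 1) (deriv (deriv g))"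
    using f g by (auto simp: in_S2_def in_Hardy_def holomorphic_on_imp_continuous_on)
  have T: "continuous_on (ball 0 1) T"
    using f g unfolding T_def in_S2_def
    by (intro holomorphic_on_imp_continuous_on holomorphic_intros holomorphic_deriv) auto
  have const: "((\<lambda>t. (A * B) powr p) has_integral (A * B) powr p * (2 * pi)) {0..2*pi}"
    using has_integral_const_real[of "(A * B) powr p" 0 "2 * pi"] by (simp add: mult.commute)
  have "2 * pi * hardy_mean p T r
      \<le> 4 powr p * ((A * B) powr p * (2 * pi) + (16 * B) powr p * integral {0..2*pi} JF
        + (16 * A) powr p * integral {0..2*pi} JG + (9 * A) powr p * (2 * pi * hardy_mean p (deriv (deriv g)) r))"
  proof (rule has_integral_le[OF norm_powr_circle_has_integral[OF T r01 p0]])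
    show "((\<lambda>t. 4 powr p * ((A * B) powr p + (16 * B) powr p * JF t + (16 * A) powr p * JG t
        + (9 * A) powr p * norm (deriv (deriv g) (of_real r * cis t)) powr p)) has_integral
      4 powr p * ((A * B) powr p * (2 * pi) + (16 * B) powr p * integral {0..2*pi} JF
        + (16 * A) powr p * integral {0..2*pi} JG + (9 * A) powr p * (2 * pi * hardy_mean p (deriv (deriv g)) r)))
      {0..2*pi}"
      unfolding JF_def JG_def
      by (intro has_integral_mult_right has_integral_add const integrable_integral
          integrable_continuous_interval continuous_on_radial_powr_integral
          norm_powr_circle_has_integral f'' g'' p0 r01)
    show "norm (T (of_real r * cis t)) powr p \<le> 4 powr p * ((A * B) powr p + (16 * B) powr p * JF t
        + (16 * A) powr p * JG t + (9 * A) powr p * norm (deriv (deriv g) (of_real r * cis t)) powr p)" for t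
      using norm_powr_deriv2_volterra_le[OF f g p r01, of t] by (simp add: T_def A_def B_def JF_def JG_def)
  qed
  also have "\<dots> \<le> 2 * pi * (1536 * A * B) powr p"
    unfolding A_def B_def JF_def JG_def
    by (intro collect_mean_bounds S2_norm_ge p integral_radial_powr_integral_deriv2_le f g r01
        hardy_mean_deriv2_le_S2_norm p0 r)
  finally show ?thesis
    by (simp add: T_def A_def B_def)
qed

lemma volterra_bounded_on_S2:
  assumes f: "in_S2 p f" and g: "in_S2 p g" and p: "1 \<le> p"
  shows "in_S2 p (volterra g f)"
    and "S2_norm p (volterra g f) \<le> (norm (deriv g 0) + 1536 * S2_norm p g) * S2_norm p f"
proof -
  define V where "V = volterra g f"
  have hf: "f holomorphic_on ball 0 1" and hg: "g holomorphic_on ball 0 1"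
    using f g by (auto simp: in_S2_def)
  have V: "V holomorphic_on ball 0 1" and V'': "deriv (deriv V) holomorphic_on ball 0 1"
    unfolding V_def by (auto intro!: holomorphic_on_volterra holomorphic_deriv hf hg)
  have mean_le: "hardy_mean p (deriv (deriv V)) r \<le> (1536 * S2_norm p f * S2_norm p g) powr p"
    if r: "r \<in> {0<..<1}" for r
  proof -
    have "hardy_mean p (deriv (deriv V)) r
        = hardy_mean p (\<lambda>z. deriv f z * deriv g z + f z * deriv (deriv g) z) r"
      using r by (intro hardy_mean_cong) (auto simp: V_def deriv2_volterra[OF hf hg])
    also have "\<dots> \<le> (1536 * S2_norm p f * S2_norm p g) powr p"
      by (rule hardy_mean_deriv2_volterra_le[OF f g p r])
    finally show ?thesis .
  qed
  then show "in_S2 p (volterra g f)"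
    using V V'' mean_le
    by (auto simp: in_S2_def in_Hardy_def V_def intro!: bdd_aboveI2[where M = "(1536 * S2_norm p f * S2_norm p g) powr p"])
  have "Hardy_norm p (deriv (deriv V)) \<le> ((1536 * S2_norm p f * S2_norm p g) powr p) powr (1 / p)"
    using p by (intro Hardy_norm_le holomorphic_on_imp_continuous_on V'' mean_le) auto
  also have "\<dots> = 1536 * S2_norm p f * S2_norm p g"
    using p S2_norm_ge(4)[of p f] S2_norm_ge(4)[of p g] by (simp add: powr_powr)
  finally have "S2_norm p V \<le> norm (f 0 * deriv g 0) + 1536 * S2_norm p f * S2_norm p g"
    using deriv_volterra[OF hf hg, of 0] by (simp add: S2_norm_def V_def volterra_def)
  also have "\<dots> \<le> S2_norm p f * norm (deriv g 0) + 1536 * S2_norm p f * S2_norm p g"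
    using S2_norm_ge(1)[of f p] by (simp add: norm_mult mult_right_mono)
  finally show "S2_norm p (volterra g f) \<le> (norm (deriv g 0) + 1536 * S2_norm p g) * S2_norm p f"
    by (simp add: V_def algebra_simps)
qed

lemma in_S2_const:
  assumes "0 < p"
  shows "in_S2 p (\<lambda>_. c)"
proof -
  have "hardy_mean p (\<lambda>_. 0) r = 0" for r
    using assms by (simp add: hardy_mean_def)
  then show ?thesis
    by (simp add: in_S2_def in_Hardy_def image_constant_conv)
qed

lemma in_S2_of_in_S2_volterra_1:
  assumes V: "in_S2 p (volterra g (\<lambda>_. 1))" and g: "g holomorphic_on ball 0 1"
  shows "in_S2 p g"
proof -
  have "hardy_mean p (deriv (deriv (volterra g (\<lambda>_. 1)))) r = hardy_mean p (deriv (deriv g)) r"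
    if "r \<in> {0<..<1}" for r
    using that by (intro hardy_mean_cong) (auto simp: deriv2_volterra[OF _ g])
  then have "hardy_mean p (deriv (deriv (volterra g (\<lambda>_. 1)))) ` {0<..<1} = hardy_mean p (deriv (deriv g)) ` {0<..<1}"
    by (rule image_cong[OF refl])
  then show ?thesis
    using V g by (auto simp: in_S2_def in_Hardy_def intro!: holomorphic_deriv)
qed

theorem theorem4p1:
  fixes p :: real and g :: "complex \<Rightarrow> complex"
  assumes "1 \<le> p" and "g holomorphic_on ball 0 1"
  shows "((\<forall>f. in_S2 p f \<longrightarrow> in_S2 p (volterra g f)) \<and>
          (\<exists>C. \<forall>f. in_S2 p f \<longrightarrow> S2_norm p (volterra g f) \<le> C * S2_norm p f))
         \<longleftrightarrow> in_S2 p g"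
proof
  assume "(\<forall>f. in_S2 p f \<longrightarrow> in_S2 p (volterra g f)) \<and>
          (\<exists>C. \<forall>f. in_S2 p f \<longrightarrow> S2_norm p (volterra g f) \<le> C * S2_norm p f)"
  moreover have "in_S2 p (\<lambda>_. 1)"
    using assms(1) by (intro in_S2_const) simp
  ultimately show "in_S2 p g"
    using in_S2_of_in_S2_volterra_1[OF _ assms(2)] by blast
next
  assume "in_S2 p g"
  then show "(\<forall>f. in_S2 p f \<longrightarrow> in_S2 p (volterra g f)) \<and>
          (\<exists>C. \<forall>f. in_S2 p f \<longrightarrow> S2_norm p (volterra g f) \<le> C * S2_norm p f)"
    using volterra_bounded_on_S2[OF _ _ assms(1)] by blast
qed

end
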